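(* Let $D$ be an integral domain, $T$ an overring of $D$, $\star$ a semistar operation on $D$ and $\star'$ a semistar operation on $T$ with $T^{\star'}=T$. If $T$ is $(\star,\star')$-linked to $D$, then $T^{\ell_{\star,T}}=T$.
   Context: Let $D$ be an integral domain with quotient field $K$. $\overline{\mathbf F}(D)$ denotes the set of all nonzero $D$-submodules of $K$ and $\mathbf f(D)$ the set of nonzero finitely generated $D$-submodules of $K$. A semistar operation on $D$ is a map $\star:\overline{\mathbf F}(D)\to\overline{\mathbf F}(D)$, $E\mapsto E^\star$, such that for all $0\ne x\in K$ and $E,F\in\overline{\mathbf F}(D)$: (1) $(xE)^\star=xE^\star$; (2) $E\subseteq F\Rightarrow E^\star\subseteq F^\star$; (3) $E\subseteq E^\star$ and $(E^\star)^\star=E^\star$. $\star_f$ is defined by $E^{\star_f}=\bigcup\{F^\star:F\in\mathbf f(D),F\subseteq E\}$. A nonzero ideal $I$ of $D$ is a quasi-$\star$-ideal if $I^\star\cap D=I$; a quasi-$\star$-prime is a prime quasi-$\star$-ideal. An overring of $D$ is a ring $T$ with $D\subseteq T\subseteq K$; semistar operations on $T$ are defined likewise. $T$ is $(\star,\star')$-linked to $D$ if for every nonzero finitely generated ideal $F\subseteq D$ with $F^\star=D^\star$ one has $(FT)^{\star'}=T^{\star'}$. The semistar operation $\ell_{\star,T}$ on $T$ is defined by $E^{\ell_{\star,T}}=\bigcap\{ET_{D\setminus P}: P$ a quasi-$\star_f$-prime ideal of $D\}$ for $E\in\overline{\mathbf F}(T)$ (equal to $K$ if there are none). *)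

theory Defs
  imports Main
begin

text \<open>The quotient field K is modelled as a type 'a of class field; rings D, T are
subsets of it.\<close>

definition subring :: "'a::field set \<Rightarrow> bool" where
  "subring R \<longleftrightarrow> 0 \<in> R \<and> 1 \<in> R \<and> (\<forall>x\<in>R. \<forall>y\<in>R. x + y \<in> R \<and> x - y \<in> R \<and> x * y \<in> R)"

text \<open>D is an integral domain whose quotient field is the ambient field (all of UNIV).\<close>
definition domain_with_qf :: "'a::field set \<Rightarrow> bool" where
  "domain_with_qf D \<longleftrightarrow> subring D \<and> (\<forall>x. \<exists>a\<in>D. \<exists>b\<in>D. b \<noteq> 0 \<and> x = a / b)"

definition overring :: "'a::field set \<Rightarrow> 'a set \<Rightarrow> bool" where
  "overring D T \<longleftrightarrow> subring T \<and> D \<subseteq> T"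

inductive_set sprod :: "'a::field set \<Rightarrow> 'a set \<Rightarrow> 'a set" for A B where
  zero: "0 \<in> sprod A B"
| prod: "a \<in> A \<Longrightarrow> b \<in> B \<Longrightarrow> a * b \<in> sprod A B"
| add: "x \<in> sprod A B \<Longrightarrow> y \<in> sprod A B \<Longrightarrow> x + y \<in> sprod A B"

definition submod :: "'a::field set \<Rightarrow> 'a set \<Rightarrow> bool" where
  "submod R E \<longleftrightarrow> 0 \<in> E \<and> (\<forall>x\<in>E. \<forall>y\<in>E. x + y \<in> E) \<and> (\<forall>r\<in>R. \<forall>x\<in>E. r * x \<in> E)"

definition Fbar :: "'a::field set \<Rightarrow> 'a set set" where
  "Fbar R = {E. submod R E \<and> E \<noteq> {0}}"

definition ffg :: "'a::field set \<Rightarrow> 'a set set" where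
  "ffg R = {E. E \<in> Fbar R \<and> (\<exists>G. finite G \<and> E = sprod R G)}"

definition smul :: "'a::field \<Rightarrow> 'a set \<Rightarrow> 'a set" where
  "smul x E = (\<lambda>e. x * e) ` E"

definition semistar :: "'a::field set \<Rightarrow> ('a set \<Rightarrow> 'a set) \<Rightarrow> bool" where
  "semistar R st \<longleftrightarrow>
     (\<forall>E\<in>Fbar R. st E \<in> Fbar R) \<and>
     (\<forall>x E. x \<noteq> 0 \<longrightarrow> E \<in> Fbar R \<longrightarrow> st (smul x E) = smul x (st E)) \<and>
     (\<forall>E\<in>Fbar R. \<forall>F\<in>Fbar R. E \<subseteq> F \<longrightarrow> st E \<subseteq> st F) \<and>
     (\<forall>E\<in>Fbar R. E \<subseteq> st E \<and> st (st E) = st E)"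

definition star_f :: "'a::field set \<Rightarrow> ('a set \<Rightarrow> 'a set) \<Rightarrow> 'a set \<Rightarrow> 'a set" where
  "star_f R st E = \<Union>{st F | F. F \<in> ffg R \<and> F \<subseteq> E}"

definition ideal_of :: "'a::field set \<Rightarrow> 'a set \<Rightarrow> bool" where
  "ideal_of D I \<longleftrightarrow> I \<subseteq> D \<and> submod D I"

definition quasi_star_ideal :: "'a::field set \<Rightarrow> ('a set \<Rightarrow> 'a set) \<Rightarrow> 'a set \<Rightarrow> bool" where
  "quasi_star_ideal D st I \<longleftrightarrow> ideal_of D I \<and> I \<noteq> {0} \<and> st I \<inter> D = I"

definition prime_ideal_of :: "'a::field set \<Rightarrow> 'a set \<Rightarrow> bool" where
  "prime_ideal_of D P \<longleftrightarrow> ideal_of D P \<and> P \<noteq> D \<and>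
     (\<forall>a\<in>D. \<forall>b\<in>D. a * b \<in> P \<longrightarrow> a \<in> P \<or> b \<in> P)"

definition quasi_star_prime :: "'a::field set \<Rightarrow> ('a set \<Rightarrow> 'a set) \<Rightarrow> 'a set \<Rightarrow> bool" where
  "quasi_star_prime D st P \<longleftrightarrow> quasi_star_ideal D st P \<and> prime_ideal_of D P"

definition loc :: "'a::field set \<Rightarrow> 'a set \<Rightarrow> 'a set \<Rightarrow> 'a set" where
  "loc T D P = {t / s | t s. t \<in> T \<and> s \<in> D \<and> s \<notin> P}"

definition linked :: "'a::field set \<Rightarrow> ('a set \<Rightarrow> 'a set) \<Rightarrow> 'a set \<Rightarrow> ('a set \<Rightarrow> 'a set) \<Rightarrow> bool" where
  "linked D st T st' \<longleftrightarrow>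
     (\<forall>F. ideal_of D F \<and> F \<noteq> {0} \<and> (\<exists>G. finite G \<and> F = sprod D G) \<and> st F = st D
        \<longrightarrow> st' (sprod F T) = st' T)"

text \<open>\<open>\<ell>_{\<star>,T}\<close>; an empty intersection is the whole field K = UNIV.\<close>
definition ell :: "'a::field set \<Rightarrow> ('a set \<Rightarrow> 'a set) \<Rightarrow> 'a set \<Rightarrow> 'a set \<Rightarrow> 'a set" where
  "ell D st T E = \<Inter>{sprod E (loc T D P) | P. quasi_star_prime D (star_f D st) P}"

end

theory Submission imports Defs begin

text \<open>Each localization \<open>T\<^sub>D\<^sub>\<setminus>\<^sub>P\<close> contains \<open>T\<close>, so only
\<open>T\<^sup>\<ell> \<subseteq> T\<close> needs an argument. For \<open>x \<in> T\<^sup>\<ell>\<close> consider the conductor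
\<open>I = (T :\<^sub>D x)\<close>, a nonzero ideal of \<open>D\<close>. If \<open>1 \<in> I\<^sup>\<star>\<^sup>f\<close>, some finitely generated
\<open>F \<subseteq> I\<close> has \<open>F\<^sup>\<star> = D\<^sup>\<star>\<close>; linkedness gives \<open>(FT)\<^sup>\<star>\<^sup>' = T\<close>, and \<open>xFT \<subseteq> T\<close>
then yields \<open>xT \<subseteq> T\<close>. Otherwise Zorn's lemma gives an ideal \<open>P \<supseteq> I\<close> maximal with
\<open>1 \<notin> P\<^sup>\<star>\<^sup>f\<close>; such a \<open>P\<close> is a quasi-\<open>\<star>\<^sub>f\<close>-prime, and writing \<open>x = t/s\<close> with
\<open>s \<in> D \<setminus> P\<close> gives \<open>s \<in> I \<setminus> P\<close>, a contradiction.\<close>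

section \<open>Modules generated by products\<close>

lemma submod_0: "submod R E \<Longrightarrow> 0 \<in> E"
  unfolding submod_def by blast

lemma submod_add: "submod R E \<Longrightarrow> x \<in> E \<Longrightarrow> y \<in> E \<Longrightarrow> x + y \<in> E"
  unfolding submod_def by blast

lemma submod_mult: "submod R E \<Longrightarrow> r \<in> R \<Longrightarrow> x \<in> E \<Longrightarrow> r * x \<in> E"
  unfolding submod_def by blast

lemma sprod_least:
  assumes "submod R H" and "\<And>a b. a \<in> A \<Longrightarrow> b \<in> B \<Longrightarrow> a * b \<in> H"
  shows "sprod A B \<subseteq> H"
proof
  fix x assume "x \<in> sprod A B"
  then show "x \<in> H" by induct (use assms in \<open>auto simp: submod_def\<close>)
qed

lemma sprod_subset: "submod R E \<Longrightarrow> G \<subseteq> E \<Longrightarrow> sprod R G \<subseteq> E"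
  by (rule sprod_least) (auto intro: submod_mult)

lemma sprod_commute: "sprod A B = sprod B A"
proof -
  have "sprod A B \<subseteq> sprod B A" for A B :: "'a set"
  proof
    fix x assume "x \<in> sprod A B"
    then show "x \<in> sprod B A"
    proof induct
      case (prod a b)
      then show ?case by (metis mult.commute sprod.prod)
    qed (auto intro: sprod.intros)
  qed
  then show ?thesis by blast
qed

lemma sprod_mono:
  assumes "A \<subseteq> A'" "B \<subseteq> B'"
  shows "sprod A B \<subseteq> sprod A' B'"
proof
  fix x assume "x \<in> sprod A B"
  then show "x \<in> sprod A' B'" by induct (use assms in \<open>auto intro: sprod.intros\<close>)
qed

lemma subset_sprod: "1 \<in> R \<Longrightarrow> G \<subseteq> sprod R G"
  using sprod.prod[of 1 R] by fastforce

lemma submod_sprod: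
  assumes "\<And>r a. r \<in> R \<Longrightarrow> a \<in> A \<Longrightarrow> r * a \<in> A"
  shows "submod R (sprod A B)"
proof -
  have "r * x \<in> sprod A B" if "r \<in> R" "x \<in> sprod A B" for r x
    using that(2)
  proof induct
    case (prod a b)
    then show ?case using assms[OF that(1)] by (metis mult.assoc sprod.prod)
  qed (auto simp: distrib_left intro: sprod.intros)
  then show ?thesis unfolding submod_def by (auto intro: sprod.intros)
qed

lemma sprod_empty: "sprod A {} = {0}"
proof
  show "sprod A {} \<subseteq> {0}" by (rule sprod_least[of UNIV]) (auto simp: submod_def)
qed (auto intro: sprod.zero)

lemma sprod_mult_closed:
  assumes H: "submod R H" and gens: "\<And>a b. a \<in> A \<Longrightarrow> b \<in> B \<Longrightarrow> a * b \<in> H"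
    and "x \<in> sprod R A" "y \<in> sprod R B"
  shows "x * y \<in> H"
  using \<open>x \<in> sprod R A\<close>
proof induct
  case (prod r a)
  show ?case using \<open>y \<in> sprod R B\<close>
  proof induct
    case (prod s b)
    have "r * a * (s * b) = r * (s * (a * b))" by (simp add: algebra_simps)
    also have "\<dots> \<in> H"
      using H gens \<open>r \<in> R\<close> \<open>a \<in> A\<close> prod by (simp add: submod_def)
    finally show ?case .
  qed (use H in \<open>auto simp: submod_def distrib_left\<close>)
qed (use H in \<open>auto simp: submod_def distrib_right\<close>)

lemma submod_Union_chain:
  assumes "C \<noteq> {}" "subset.chain \<A> C" "\<And>J. J \<in> C \<Longrightarrow> submod R J"
  shows "submod R (\<Union>C)"
  unfolding submod_def
proof (intro conjI ballI)
  show "0 \<in> \<Union>C" using assms(1,3) submod_0 by blast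
next
  fix x y assume "x \<in> \<Union>C" "y \<in> \<Union>C"
  then obtain X Y where "X \<in> C" "Y \<in> C" "x \<in> X" "y \<in> Y" by blast
  moreover have "X \<subseteq> Y \<or> Y \<subseteq> X"
    using assms(2) \<open>X \<in> C\<close> \<open>Y \<in> C\<close> by (auto simp: subset_chain_def)
  ultimately show "x + y \<in> \<Union>C" using assms(3) submod_add by (metis UnionI subsetD)
qed (use assms(3) submod_mult in blast)

lemma Fbar_I: "submod R E \<Longrightarrow> e \<in> E \<Longrightarrow> e \<noteq> 0 \<Longrightarrow> E \<in> Fbar R"
  unfolding Fbar_def by auto

lemma Fbar_submod: "E \<in> Fbar R \<Longrightarrow> submod R E"
  unfolding Fbar_def by simp

lemma Fbar_nonzero: "E \<in> Fbar R \<Longrightarrow> \<exists>e\<in>E. e \<noteq> 0"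
  unfolding Fbar_def submod_def by auto

lemma ideal_Fbar: "ideal_of D P \<Longrightarrow> P \<noteq> {0} \<Longrightarrow> P \<in> Fbar D"
  unfolding ideal_of_def Fbar_def by blast

lemma submod_smul: "submod R E \<Longrightarrow> submod R (smul x E)"
  unfolding submod_def smul_def
proof (elim conjE, intro conjI ballI)
  fix a b assume "\<forall>a\<in>E. \<forall>b\<in>E. a + b \<in> E" "a \<in> (*) x ` E" "b \<in> (*) x ` E"
  then show "a + b \<in> (*) x ` E" by (auto simp flip: distrib_left)
next
  fix r a assume "\<forall>r\<in>R. \<forall>a\<in>E. r * a \<in> E" "r \<in> R" "a \<in> (*) x ` E"
  then show "r * a \<in> (*) x ` E" by (auto simp: mult.left_commute[of r x])
qed force

lemma smul_Fbar:
  assumes E: "E \<in> Fbar R" and "x \<noteq> 0"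
  shows "smul x E \<in> Fbar R"
proof -
  obtain e where "e \<in> E" "e \<noteq> 0" using Fbar_nonzero[OF E] by blast
  then have "x * e \<in> smul x E" "x * e \<noteq> 0" using \<open>x \<noteq> 0\<close> by (auto simp: smul_def)
  with submod_smul[OF Fbar_submod[OF E]] show ?thesis by (rule Fbar_I)
qed

lemma subring_0: "subring D \<Longrightarrow> 0 \<in> D"
  and subring_1: "subring D \<Longrightarrow> 1 \<in> D"
  and subring_add: "subring D \<Longrightarrow> x \<in> D \<Longrightarrow> y \<in> D \<Longrightarrow> x + y \<in> D"
  and subring_mult: "subring D \<Longrightarrow> x \<in> D \<Longrightarrow> y \<in> D \<Longrightarrow> x * y \<in> D"
  unfolding subring_def by blast+

lemma subring_submod: "subring D \<Longrightarrow> submod D D"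
  unfolding subring_def submod_def by blast

lemma subring_Fbar: "subring D \<Longrightarrow> D \<in> Fbar D"
  by (rule Fbar_I[of D D 1]) (auto simp: subring_submod subring_1)

lemma submod_sprod_subring: "subring R \<Longrightarrow> submod R (sprod R G)"
  by (rule submod_sprod) (rule subring_mult)

lemma sprod_sprod:
  assumes R: "subring R"
  shows "sprod (sprod R A) (sprod R B) = sprod R ((\<lambda>(a, b). a * b) ` (A \<times> B))"
    (is "?L = sprod R ?G")
proof
  have gens: "a * b \<in> sprod R ?G" if "a \<in> A" "b \<in> B" for a b
    using subset_sprod[OF subring_1[OF R], of ?G] that by blast
  show "?L \<subseteq> sprod R ?G"
  proof (rule sprod_least[OF submod_sprod_subring[OF R]])
    fix x y assume "x \<in> sprod R A" "y \<in> sprod R B"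
    then show "x * y \<in> sprod R ?G"
      using sprod_mult_closed[OF submod_sprod_subring[OF R] gens] by blast
  qed
  have "submod R ?L"
    by (rule submod_sprod) (rule submod_mult[OF submod_sprod_subring[OF R]])
  then show "sprod R ?G \<subseteq> ?L"
  proof (rule sprod_least)
    fix r g assume "r \<in> R" "g \<in> ?G"
    then obtain a b where "a \<in> A" "b \<in> B" "g = a * b" by auto
    then have "r * a \<in> sprod R A" "b \<in> sprod R B"
      using \<open>r \<in> R\<close> subset_sprod[OF subring_1[OF R]] by (auto intro: sprod.prod)
    then show "r * g \<in> ?L" unfolding \<open>g = a * b\<close> by (metis mult.assoc sprod.prod)
  qed
qed

lemma ffg_Fbar: "F \<in> ffg R \<Longrightarrow> F \<in> Fbar R"
  unfolding ffg_def by simp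

lemma ffg_I: "subring R \<Longrightarrow> finite G \<Longrightarrow> sprod R G \<noteq> {0} \<Longrightarrow> sprod R G \<in> ffg R"
  unfolding ffg_def Fbar_def using submod_sprod_subring by blast

lemma ffg_mult:
  assumes R: "subring R" and E: "E \<in> ffg R" and F: "F \<in> ffg R"
  shows "sprod E F \<in> ffg R"
proof -
  obtain A B where A: "finite A" "E = sprod R A" and B: "finite B" "F = sprod R B"
    using E F unfolding ffg_def by blast
  obtain e f where "e \<in> E" "f \<in> F" "e \<noteq> 0" "f \<noteq> 0"
    using Fbar_nonzero[OF ffg_Fbar[OF E]] Fbar_nonzero[OF ffg_Fbar[OF F]] by blast
  then have "e * f \<in> sprod E F" "e * f \<noteq> 0" by (simp_all add: sprod.prod)
  then have "sprod E F \<noteq> {0}" by blast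
  moreover have "finite ((\<lambda>(a, b). a * b) ` (A \<times> B))" using A(1) B(1) by simp
  ultimately show ?thesis
    unfolding A(2) B(2) sprod_sprod[OF R] by (intro ffg_I[OF R])
qed

lemma one_notin_proper_ideal:
  assumes "ideal_of D P" "P \<noteq> D"
  shows "1 \<notin> P"
proof
  assume "1 \<in> P"
  then have "d * 1 \<in> P" if "d \<in> D" for d
    using assms(1) that unfolding ideal_of_def submod_def by blast
  then show False using assms by (auto simp: ideal_of_def)
qed

section \<open>Semistar operations and \<open>\<star>\<^sub>f\<close>\<close>

locale semistar_operation =
  fixes R :: "'a::field set" and st :: "'a set \<Rightarrow> 'a set"
  assumes semistar: "semistar R st"
begin

lemma st_Fbar: "E \<in> Fbar R \<Longrightarrow> st E \<in> Fbar R"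
  using semistar unfolding semistar_def by simp

lemma st_smul: "x \<noteq> 0 \<Longrightarrow> E \<in> Fbar R \<Longrightarrow> st (smul x E) = smul x (st E)"
  using semistar unfolding semistar_def by simp

lemma st_mono: "E \<in> Fbar R \<Longrightarrow> F \<in> Fbar R \<Longrightarrow> E \<subseteq> F \<Longrightarrow> st E \<subseteq> st F"
  using semistar unfolding semistar_def by simp

lemma st_ext: "E \<in> Fbar R \<Longrightarrow> E \<subseteq> st E"
  using semistar unfolding semistar_def by simp

lemma st_idem: "E \<in> Fbar R \<Longrightarrow> st (st E) = st E"
  using semistar unfolding semistar_def by simp

lemma st_submod: "E \<in> Fbar R \<Longrightarrow> submod R (st E)"
  by (intro Fbar_submod st_Fbar)

lemma st_absorb: "E \<in> Fbar R \<Longrightarrow> F \<in> Fbar R \<Longrightarrow> E \<subseteq> st F \<Longrightarrow> st E \<subseteq> st F"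
  by (metis st_Fbar st_idem st_mono)

lemma star_fI: "F \<in> ffg R \<Longrightarrow> F \<subseteq> E \<Longrightarrow> x \<in> st F \<Longrightarrow> x \<in> star_f R st E"
  unfolding star_f_def by blast

lemma star_fE:
  assumes "x \<in> star_f R st E"
  obtains F where "F \<in> ffg R" "F \<subseteq> E" "x \<in> st F"
  using assms unfolding star_f_def by blast

lemma one_mem_st_of_products:
  assumes E: "E \<in> Fbar R" and F: "F \<in> Fbar R" and H: "H \<in> Fbar R"
    and "1 \<in> st E" "1 \<in> st F" and products: "\<And>e f. e \<in> E \<Longrightarrow> f \<in> F \<Longrightarrow> e * f \<in> H"
  shows "1 \<in> st H"
proof -
  have "F \<subseteq> st H"
  proof
    fix f assume "f \<in> F"
    show "f \<in> st H"
    proof (cases "f = 0")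
      case True
      then show ?thesis using submod_0[OF st_submod[OF H]] by simp
    next
      case False
      have "smul f E \<subseteq> H"
        unfolding smul_def using products \<open>f \<in> F\<close> by (auto simp: mult.commute)
      then have "smul f (st E) \<subseteq> st H"
        using st_mono[OF smul_Fbar[OF E False] H] st_smul[OF False E] by simp
      then show ?thesis using \<open>1 \<in> st E\<close> unfolding smul_def by force
    qed
  qed
  then show ?thesis using st_absorb[OF F H] \<open>1 \<in> st F\<close> by blast
qed

end

locale semistar_domain = semistar_operation D st
  for D :: "'a::field set" and st +
  assumes subring_D: "subring D"
begin

lemma subset_sprod_D: "G \<subseteq> sprod D G"
  by (rule subset_sprod[OF subring_1[OF subring_D]])

lemma principal_ffg:
  assumes "p \<noteq> 0"
  shows "sprod D {p} \<in> ffg D" "p \<in> sprod D {p}"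
proof -
  show "p \<in> sprod D {p}" using subset_sprod_D by blast
  then show "sprod D {p} \<in> ffg D" using assms by (intro ffg_I[OF subring_D]) auto
qed

lemma st_eq_st_D_if_one_mem:
  assumes F: "F \<in> Fbar D" "F \<subseteq> D" and "1 \<in> st F"
  shows "st F = st D"
proof
  show "st F \<subseteq> st D" by (rule st_mono[OF F(1) subring_Fbar[OF subring_D] F(2)])
  have "D \<subseteq> st F"
    using submod_mult[OF st_submod[OF F(1)] _ \<open>1 \<in> st F\<close>] by force
  then show "st D \<subseteq> st F" by (rule st_absorb[OF subring_Fbar[OF subring_D] F(1)])
qed

lemma star_f_directed:
  assumes P: "submod D P" and "finite G" "G \<noteq> {}" "G \<subseteq> star_f D st P"
  shows "\<exists>F\<in>ffg D. F \<subseteq> P \<and> G \<subseteq> st F"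
  using assms(2-4)
proof (induct G rule: finite_ne_induct)
  case (singleton g)
  then obtain F where "F \<in> ffg D" "F \<subseteq> P" "g \<in> st F" by (auto elim: star_fE)
  then show ?case by blast
next
  case (insert g G)
  obtain F1 where F1: "F1 \<in> ffg D" "F1 \<subseteq> P" "G \<subseteq> st F1" using insert by auto
  obtain F2 where F2: "F2 \<in> ffg D" "F2 \<subseteq> P" "g \<in> st F2"
    using insert.prems by (auto elim: star_fE)
  obtain A B where A: "finite A" "F1 = sprod D A" and B: "finite B" "F2 = sprod D B"
    using F1(1) F2(1) unfolding ffg_def by blast
  define F where "F = sprod D (A \<union> B)"
  have sub: "F1 \<subseteq> F" "F2 \<subseteq> F" unfolding F_def A(2) B(2) by (simp_all add: sprod_mono)
  have "A \<union> B \<subseteq> P"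
    using subset_sprod_D A(2) B(2) F1(2) F2(2) by blast
  then have "F \<subseteq> P" unfolding F_def by (rule sprod_subset[OF P])
  moreover have "F \<in> ffg D"
    using sub(1) Fbar_nonzero[OF ffg_Fbar[OF F1(1)]] A(1) B(1) unfolding F_def
    by (intro ffg_I[OF subring_D]) auto
  moreover have "st F1 \<subseteq> st F" "st F2 \<subseteq> st F"
    using st_mono[OF ffg_Fbar[OF F1(1)] ffg_Fbar[OF \<open>F \<in> ffg D\<close>] sub(1)]
      st_mono[OF ffg_Fbar[OF F2(1)] ffg_Fbar[OF \<open>F \<in> ffg D\<close>] sub(2)] by auto
  ultimately show ?case using F1(3) F2(3) by blast
qed

lemma star_f_ext:
  assumes P: "P \<in> Fbar D"
  shows "P \<subseteq> star_f D st P"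
proof -
  have principal: "sprod D {q} \<subseteq> P" "q \<in> st (sprod D {q})" if "q \<in> P" "q \<noteq> 0" for q
  proof -
    show "sprod D {q} \<subseteq> P" using that by (intro sprod_subset[OF Fbar_submod[OF P]]) auto
    show "q \<in> st (sprod D {q})"
      using principal_ffg[OF \<open>q \<noteq> 0\<close>] st_ext ffg_Fbar by blast
  qed
  obtain p0 where p0: "p0 \<in> P" "p0 \<noteq> 0" using Fbar_nonzero[OF P] by blast
  have "0 \<in> st (sprod D {p0})"
    using submod_0[OF st_submod[OF ffg_Fbar[OF principal_ffg(1)[OF p0(2)]]]] .
  then have "0 \<in> star_f D st P"
    using star_fI[OF principal_ffg(1)[OF p0(2)] principal(1)[OF p0]] by blast
  show ?thesis
  proof
    fix p assume "p \<in> P"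
    show "p \<in> star_f D st P"
    proof (cases "p = 0")
      case False
      show ?thesis
        using star_fI[OF principal_ffg(1)[OF False] principal[OF \<open>p \<in> P\<close> False]] .
    qed (use \<open>0 \<in> star_f D st P\<close> in simp)
  qed
qed

lemma star_f_submod:
  assumes P: "P \<in> Fbar D"
  shows "submod D (star_f D st P)"
  unfolding submod_def
proof (intro conjI ballI)
  show "0 \<in> star_f D st P" using star_f_ext[OF P] submod_0[OF Fbar_submod[OF P]] by blast
next
  fix x y assume "x \<in> star_f D st P" "y \<in> star_f D st P"
  then obtain F where F: "F \<in> ffg D" "F \<subseteq> P" "{x, y} \<subseteq> st F"
    using star_f_directed[OF Fbar_submod[OF P], of "{x, y}"] by auto
  then have "x + y \<in> st F" using submod_add[OF st_submod[OF ffg_Fbar[OF F(1)]]] by auto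
  then show "x + y \<in> star_f D st P" using star_fI F by blast
next
  fix r x assume "r \<in> D" "x \<in> star_f D st P"
  then obtain F where F: "F \<in> ffg D" "F \<subseteq> P" "x \<in> st F" by (auto elim: star_fE)
  then have "r * x \<in> st F" using submod_mult[OF st_submod[OF ffg_Fbar[OF F(1)]] \<open>r \<in> D\<close>] by auto
  then show "r * x \<in> star_f D st P" using star_fI F by blast
qed

lemma star_f_star_f_subset:
  assumes P: "submod D P" and E: "E \<subseteq> star_f D st P"
  shows "star_f D st E \<subseteq> star_f D st P"
proof
  fix x assume "x \<in> star_f D st E"
  then obtain F where F: "F \<in> ffg D" "F \<subseteq> E" "x \<in> st F" by (rule star_fE)
  then obtain G where G: "finite G" "F = sprod D G" unfolding ffg_def by blast
  have "G \<noteq> {}" using F(1) G(2) sprod_empty by (auto simp: ffg_def Fbar_def)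
  moreover have "G \<subseteq> star_f D st P"
    using subset_sprod_D G(2) F(2) E by blast
  ultimately obtain F' where F': "F' \<in> ffg D" "F' \<subseteq> P" "G \<subseteq> st F'"
    using star_f_directed[OF P G(1)] by blast
  have "F \<subseteq> st F'"
    unfolding G(2) using F'(3) by (rule sprod_subset[OF st_submod[OF ffg_Fbar[OF F'(1)]]])
  then have "st F \<subseteq> st F'" by (rule st_absorb[OF ffg_Fbar[OF F(1)] ffg_Fbar[OF F'(1)]])
  then show "x \<in> star_f D st P" using star_fI[OF F'(1,2)] F(3) by blast
qed

lemma star_f_Union_chain:
  assumes "C \<noteq> {}" "subset.chain \<A> C" "\<And>J. J \<in> C \<Longrightarrow> submod D J"
    and "x \<in> star_f D st (\<Union>C)"
  shows "\<exists>J\<in>C. x \<in> star_f D st J"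
proof -
  obtain F where F: "F \<in> ffg D" "F \<subseteq> \<Union>C" "x \<in> st F" using assms(4) by (rule star_fE)
  then obtain G where G: "finite G" "F = sprod D G" unfolding ffg_def by blast
  have "G \<subseteq> \<Union>C" using subset_sprod_D G(2) F(2) by blast
  then obtain J where J: "J \<in> C" "G \<subseteq> J"
    using finite_subset_Union_chain[OF G(1) _ assms(1,2)] by blast
  have "F \<subseteq> J" unfolding G(2) using J(2) by (rule sprod_subset[OF assms(3)[OF J(1)]])
  then show ?thesis using star_fI[OF F(1) \<open>F \<subseteq> J\<close> F(3)] J(1) by blast
qed

end

section \<open>Quasi-\<open>\<star>\<^sub>f\<close>-prime ideals from Zorn's lemma\<close>

definition star_f_proper_ideals :: "'a::field set \<Rightarrow> ('a set \<Rightarrow> 'a set) \<Rightarrow> 'a set set" where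
  "star_f_proper_ideals D st = {J. ideal_of D J \<and> J \<noteq> {0} \<and> 1 \<notin> star_f D st J}"

context semistar_domain
begin

lemma exists_maximal_star_f_proper_ideal:
  assumes I: "I \<in> star_f_proper_ideals D st"
  obtains P where "P \<in> star_f_proper_ideals D st" "I \<subseteq> P"
    and "\<And>J. J \<in> star_f_proper_ideals D st \<Longrightarrow> P \<subseteq> J \<Longrightarrow> J = P"
proof -
  let ?S = "{J \<in> star_f_proper_ideals D st. I \<subseteq> J}"
  have "\<exists>M\<in>?S. \<forall>X\<in>?S. M \<subseteq> X \<longrightarrow> X = M"
  proof (rule subset_Zorn_nonempty)
    show "?S \<noteq> {}" using I by blast
  next
    fix C assume C: "C \<noteq> {}" "subset.chain ?S C"
    then have CS: "C \<subseteq> ?S" by (simp add: subset_chain_def)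
    have ideals: "J \<subseteq> D" "submod D J" "1 \<notin> star_f D st J" if "J \<in> C" for J
      using CS that unfolding star_f_proper_ideals_def ideal_of_def by blast+
    have "submod D (\<Union>C)" by (rule submod_Union_chain[OF C ideals(2)])
    moreover have "\<Union>C \<subseteq> D" using ideals(1) by blast
    moreover have "I \<subseteq> \<Union>C" using C(1) CS by blast
    moreover have "0 \<in> I" "I \<noteq> {0}"
      using I submod_0 unfolding star_f_proper_ideals_def ideal_of_def by blast+
    then have "\<Union>C \<noteq> {0}" using \<open>I \<subseteq> \<Union>C\<close> by blast
    moreover have "1 \<notin> star_f D st (\<Union>C)"
    proof
      assume "1 \<in> star_f D st (\<Union>C)"
      then obtain J where "J \<in> C" "1 \<in> star_f D st J"
        using star_f_Union_chain[OF C ideals(2)] by blast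
      then show False using ideals(3) by blast
    qed
    ultimately show "\<Union>C \<in> ?S" unfolding star_f_proper_ideals_def ideal_of_def by blast
  qed
  then obtain M where M: "M \<in> ?S" and M_max: "\<forall>X\<in>?S. M \<subseteq> X \<longrightarrow> X = M" ..
  show thesis
  proof (rule that)
    show "M \<in> star_f_proper_ideals D st" "I \<subseteq> M" using M by blast+
    fix J assume "J \<in> star_f_proper_ideals D st" "M \<subseteq> J"
    then show "J = M" using M M_max by blast
  qed
qed

context
  fixes P
  assumes P: "P \<in> star_f_proper_ideals D st"
    and maximal: "\<And>J. J \<in> star_f_proper_ideals D st \<Longrightarrow> P \<subseteq> J \<Longrightarrow> J = P"
begin

lemma maximal_star_f_proper_ideal_ideal: "ideal_of D P" "P \<noteq> {0}" "1 \<notin> star_f D st P"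
  using P by (auto simp: star_f_proper_ideals_def)

lemma maximal_star_f_proper_ideal_quasi: "star_f D st P \<inter> D = P"
proof -
  note P_ideal = maximal_star_f_proper_ideal_ideal
  have PF: "P \<in> Fbar D" using ideal_Fbar P_ideal by blast
  let ?J = "star_f D st P \<inter> D"
  have "P \<subseteq> ?J" using star_f_ext[OF PF] P_ideal(1) by (auto simp: ideal_of_def)
  moreover have "ideal_of D ?J"
    using star_f_submod[OF PF] subring_submod[OF subring_D]
    unfolding ideal_of_def submod_def by blast
  moreover have "1 \<notin> star_f D st ?J"
    using star_f_star_f_subset[OF Fbar_submod[OF PF]] P_ideal(3) by blast
  moreover have "?J \<noteq> {0}"
    using \<open>P \<subseteq> ?J\<close> P_ideal(2) submod_0[OF Fbar_submod[OF PF]] by blast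
  ultimately show ?thesis using maximal by (simp add: star_f_proper_ideals_def)
qed

lemma maximal_star_f_proper_ideal_prime:
  assumes ab: "a \<in> D" "b \<in> D" "a * b \<in> P"
  shows "a \<in> P \<or> b \<in> P"
proof (rule ccontr)
  note P_ideal = maximal_star_f_proper_ideal_ideal
  have P_sub: "submod D P" "P \<subseteq> D" using P_ideal(1) by (auto simp: ideal_of_def)
  have extension: "\<exists>F\<in>ffg D. F \<subseteq> sprod D (insert c P) \<and> 1 \<in> st F"
    if "c \<in> D" "c \<notin> P" for c
  proof -
    let ?Q = "sprod D (insert c P)"
    have "?Q \<subseteq> D"
      using that P_sub(2) by (intro sprod_subset[OF subring_submod[OF subring_D]]) auto
    then have "ideal_of D ?Q" using submod_sprod_subring[OF subring_D] by (simp add: ideal_of_def)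
    moreover have "insert c P \<subseteq> ?Q" by (rule subset_sprod_D)
    ultimately have "?Q \<notin> star_f_proper_ideals D st"
      using maximal[of ?Q] that(2) P_ideal(2) submod_0[OF P_sub(1)] by auto
    then have "1 \<in> star_f D st ?Q"
      using \<open>ideal_of D ?Q\<close> \<open>insert c P \<subseteq> ?Q\<close> P_ideal(2) submod_0[OF P_sub(1)]
      by (auto simp: star_f_proper_ideals_def)
    then obtain F where "F \<in> ffg D" "F \<subseteq> ?Q" "1 \<in> st F" by (rule star_fE)
    then show ?thesis by blast
  qed
  txt \<open>Maximality puts \<open>1\<close> into the \<open>\<star>\<^sub>f\<close>-closures of \<open>P + aD\<close> and \<open>P + bD\<close>; the product
    of the two finitely generated witnesses lies in \<open>P\<close>, yet its \<open>\<star>\<close>-closure still contains \<open>1\<close>.\<close>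
  assume "\<not> (a \<in> P \<or> b \<in> P)"
  then obtain F1 F2 where F1: "F1 \<in> ffg D" "F1 \<subseteq> sprod D (insert a P)" "1 \<in> st F1"
    and F2: "F2 \<in> ffg D" "F2 \<subseteq> sprod D (insert b P)" "1 \<in> st F2"
    using extension ab by meson
  have gens: "u * v \<in> P" if uv: "u \<in> insert a P" "v \<in> insert b P" for u v
  proof -
    consider "u \<in> P" | "v \<in> P" | "u = a" "v = b" using uv by blast
    then show ?thesis
    proof cases
      case 1
      then have "v * u \<in> P" using submod_mult[OF P_sub(1)] uv(2) ab(2) P_sub(2) by blast
      then show ?thesis by (simp add: mult.commute)
    next
      case 2
      then show ?thesis using submod_mult[OF P_sub(1)] uv(1) ab(1) P_sub(2) by blast
    qed (use ab in simp)
  qed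
  have "sprod F1 F2 \<subseteq> P"
    using F1(2) F2(2) sprod_mult_closed[OF P_sub(1) gens]
    by (intro sprod_least[OF P_sub(1)]) blast
  moreover have H: "sprod F1 F2 \<in> ffg D" by (rule ffg_mult[OF subring_D F1(1) F2(1)])
  moreover have "1 \<in> st (sprod F1 F2)"
    using one_mem_st_of_products[OF ffg_Fbar[OF F1(1)] ffg_Fbar[OF F2(1)] ffg_Fbar[OF H]
        F1(3) F2(3)] by (blast intro: sprod.prod)
  ultimately show False using star_fI P_ideal(3) by blast
qed

end

lemma exists_quasi_star_prime_above:
  assumes "ideal_of D I" "I \<noteq> {0}" "1 \<notin> star_f D st I"
  obtains P where "quasi_star_prime D (star_f D st) P" "I \<subseteq> P"
proof -
  obtain P where P: "P \<in> star_f_proper_ideals D st" "I \<subseteq> P"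
    and maximal: "\<And>J. J \<in> star_f_proper_ideals D st \<Longrightarrow> P \<subseteq> J \<Longrightarrow> J = P"
    using exists_maximal_star_f_proper_ideal assms by (auto simp: star_f_proper_ideals_def)
  note P_ideal = maximal_star_f_proper_ideal_ideal[OF P(1) maximal]
  have "P \<noteq> D"
    using star_f_ext[OF ideal_Fbar[OF P_ideal(1,2)]] P_ideal(3) subring_1[OF subring_D] by blast
  then have "quasi_star_prime D (star_f D st) P"
    unfolding quasi_star_prime_def quasi_star_ideal_def prime_ideal_of_def
    using P_ideal maximal_star_f_proper_ideal_quasi[OF P(1) maximal]
      maximal_star_f_proper_ideal_prime[OF P(1) maximal] by blast
  then show thesis using P(2) by (rule that)
qed

end

section \<open>Localizations and conductors\<close>

lemma loc_submod:
  assumes T: "subring T" and DT: "D \<subseteq> T" and D: "subring D" and P: "prime_ideal_of D P"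
  shows "submod T (loc T D P)"
  unfolding submod_def
proof (intro conjI ballI)
  have P_ideal: "ideal_of D P" and P_prime: "\<And>a b. a \<in> D \<Longrightarrow> b \<in> D \<Longrightarrow> a * b \<in> P \<Longrightarrow> a \<in> P \<or> b \<in> P"
    using P unfolding prime_ideal_of_def by blast+
  have "0 \<in> P" using P_ideal submod_0 unfolding ideal_of_def by blast
  have "1 \<notin> P" using P one_notin_proper_ideal unfolding prime_ideal_of_def by blast
  then show "0 \<in> loc T D P"
    unfolding loc_def using subring_0[OF T] subring_1[OF D] by force
  fix x y assume "x \<in> loc T D P" "y \<in> loc T D P"
  then obtain t1 s1 t2 s2 where h: "x = t1 / s1" "t1 \<in> T" "s1 \<in> D" "s1 \<notin> P"
    "y = t2 / s2" "t2 \<in> T" "s2 \<in> D" "s2 \<notin> P" unfolding loc_def by blast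
  have "s1 \<noteq> 0" "s2 \<noteq> 0" using h \<open>0 \<in> P\<close> by auto
  then have "x + y = (t1 * s2 + t2 * s1) / (s1 * s2)" using h by (simp add: field_simps)
  moreover have "s1 \<in> T" "s2 \<in> T" using h DT by blast+
  then have "t1 * s2 + t2 * s1 \<in> T" using h by (simp add: subring_mult[OF T] subring_add[OF T])
  moreover have "s1 * s2 \<in> D" "s1 * s2 \<notin> P" using h P_prime subring_mult[OF D] by blast+
  ultimately show "x + y \<in> loc T D P" unfolding loc_def by blast
next
  fix r x assume "r \<in> T" "x \<in> loc T D P"
  then obtain t s where h: "x = t / s" "t \<in> T" "s \<in> D" "s \<notin> P" unfolding loc_def by blast
  then have "r * x = (r * t) / s" "r * t \<in> T" using \<open>r \<in> T\<close> subring_mult[OF T] by auto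
  then show "r * x \<in> loc T D P" using h unfolding loc_def by blast
qed

lemma subset_loc:
  assumes T: "subring T" and D: "subring D" and P: "prime_ideal_of D P"
  shows "T \<subseteq> loc T D P"
proof
  fix t assume "t \<in> T"
  moreover have "1 \<notin> P" using P one_notin_proper_ideal unfolding prime_ideal_of_def by blast
  ultimately show "t \<in> loc T D P" unfolding loc_def using subring_1[OF D] by force
qed

lemma sprod_loc:
  assumes "subring T" "D \<subseteq> T" "subring D" "prime_ideal_of D P"
  shows "sprod T (loc T D P) = loc T D P"
proof
  show "sprod T (loc T D P) \<subseteq> loc T D P"
    by (rule sprod_subset[OF loc_submod[OF assms] order_refl])
  show "loc T D P \<subseteq> sprod T (loc T D P)" by (rule subset_sprod[OF subring_1[OF assms(1)]])
qed

lemma ell_self: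
  assumes "subring T" "D \<subseteq> T" "subring D"
  shows "ell D st T T = \<Inter>{loc T D P | P. quasi_star_prime D (star_f D st) P}"
proof -
  have "sprod T (loc T D P) = loc T D P" if "quasi_star_prime D (star_f D st) P" for P
    using sprod_loc[OF assms] that by (simp add: quasi_star_prime_def)
  then show ?thesis unfolding ell_def by (intro arg_cong[where f = Inter]) blast
qed

lemma submod_multipliers:
  assumes T: "subring T" and "R \<subseteq> T"
  shows "submod R {y. y * x \<in> T}"
  unfolding submod_def
proof (intro conjI ballI)
  show "0 \<in> {y. y * x \<in> T}" using subring_0[OF T] by simp
  show "a + b \<in> {y. y * x \<in> T}" if "a \<in> {y. y * x \<in> T}" "b \<in> {y. y * x \<in> T}" for a b
    using that subring_add[OF T] by (simp add: distrib_right)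
  show "r * a \<in> {y. y * x \<in> T}" if "r \<in> R" "a \<in> {y. y * x \<in> T}" for r a
    using that assms subring_mult[OF T] by (auto simp: mult.assoc)
qed

definition conductor :: "'a::field set \<Rightarrow> 'a set \<Rightarrow> 'a \<Rightarrow> 'a set" where
  "conductor D T x = {d \<in> D. d * x \<in> T}"

lemma ideal_conductor:
  assumes "subring D" "subring T" "D \<subseteq> T"
  shows "ideal_of D (conductor D T x)"
  using submod_multipliers[OF assms(2,3), of x] subring_submod[OF assms(1)]
  unfolding ideal_of_def conductor_def submod_def by blast

lemma conductor_nonzero:
  assumes "domain_with_qf D" "D \<subseteq> T"
  shows "conductor D T x \<noteq> {0}"
proof -
  obtain a b where "a \<in> D" "b \<in> D" "b \<noteq> 0" "x = a / b"
    using assms(1) unfolding domain_with_qf_def by blast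
  then have "b \<in> conductor D T x" using assms(2) by (auto simp: conductor_def)
  with \<open>b \<noteq> 0\<close> show ?thesis by blast
qed

lemma conductor_not_subset_if_mem_loc:
  assumes "x \<in> loc T D P" "0 \<in> P"
  shows "\<not> conductor D T x \<subseteq> P"
proof -
  obtain t s where "x = t / s" "t \<in> T" "s \<in> D" "s \<notin> P"
    using assms(1) unfolding loc_def by blast
  moreover have "s \<noteq> 0" using \<open>s \<notin> P\<close> assms(2) by blast
  ultimately have "s \<in> conductor D T x" "s \<notin> P" by (auto simp: conductor_def)
  then show ?thesis by blast
qed

context semistar_domain
begin

lemma mem_if_one_mem_star_f_conductor:
  assumes T: "subring T" "D \<subseteq> T" and st': "semistar T st'" "st' T = T"
    and linked: "linked D st T st'" and one: "1 \<in> star_f D st (conductor D T x)"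
  shows "x \<in> T"
proof (cases "x = 0")
  case True
  then show ?thesis using subring_0[OF T(1)] by simp
next
  case False
  interpret T: semistar_operation T st' by (rule semistar_operation.intro[OF st'(1)])
  obtain F where F: "F \<in> ffg D" "F \<subseteq> conductor D T x" "1 \<in> st F" using one by (rule star_fE)
  have FD: "F \<subseteq> D" using F(2) unfolding conductor_def by blast
  have "st F = st D" by (rule st_eq_st_D_if_one_mem[OF ffg_Fbar[OF F(1)] FD F(3)])
  moreover have "ideal_of D F" "F \<noteq> {0}"
    using ffg_Fbar[OF F(1)] FD unfolding ideal_of_def Fbar_def by blast+
  moreover obtain G where "finite G" "F = sprod D G" using F(1) unfolding ffg_def by blast
  ultimately have FT_closure: "st' (sprod F T) = T"
    using linked st'(2) unfolding linked_def by blast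
  have "submod T (sprod F T)"
    unfolding sprod_commute[of F] by (rule submod_sprod) (rule subring_mult[OF T(1)])
  moreover obtain f where "f \<in> F" "f \<noteq> 0" using Fbar_nonzero[OF ffg_Fbar[OF F(1)]] by blast
  moreover have "f * 1 \<in> sprod F T" using \<open>f \<in> F\<close> subring_1[OF T(1)] by (rule sprod.prod)
  ultimately have FT: "sprod F T \<in> Fbar T" by (intro Fbar_I) auto
  have "sprod F T \<subseteq> {y. y * x \<in> T}"
  proof (rule sprod_least[OF submod_multipliers[OF T(1) order_refl]])
    fix g t assume "g \<in> F" "t \<in> T"
    then have "g * x \<in> T" using F(2) unfolding conductor_def by blast
    then have "t * (g * x) \<in> T" using \<open>t \<in> T\<close> subring_mult[OF T(1)] by blast
    then show "g * t \<in> {y. y * x \<in> T}" by (simp add: ac_simps)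
  qed
  then have "smul x (sprod F T) \<subseteq> T" unfolding smul_def by (auto simp: mult.commute)
  then have "st' (smul x (sprod F T)) \<subseteq> st' T"
    by (rule T.st_mono[OF smul_Fbar[OF FT False] subring_Fbar[OF T(1)]])
  then have "smul x T \<subseteq> T" using T.st_smul[OF False FT] FT_closure st'(2) by simp
  then show ?thesis using subring_1[OF T(1)] unfolding smul_def by force
qed

end

theorem lemma3p14:
  fixes D T :: "'a::field set"
    and st st' :: "'a set \<Rightarrow> 'a set"
  assumes "domain_with_qf D"
    and "overring D T"
    and "semistar D st"
    and "semistar T st'"
    and "st' T = T"
    and "linked D st T st'"
  shows "ell D st T T = T"
proof
  have D: "subring D" using assms(1) by (simp add: domain_with_qf_def)
  have T: "subring T" "D \<subseteq> T" using assms(2) by (simp_all add: overring_def)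
  interpret semistar_domain D st using assms(3) D by unfold_locales
  show "T \<subseteq> ell D st T T"
    unfolding ell_self[OF T D] using subset_loc[OF T(1) D] by (auto simp: quasi_star_prime_def)
  show "ell D st T T \<subseteq> T"
  proof
    fix x assume x: "x \<in> ell D st T T"
    show "x \<in> T"
    proof (rule ccontr)
      assume "x \<notin> T"
      then have "1 \<notin> star_f D st (conductor D T x)"
        using mem_if_one_mem_star_f_conductor[OF T assms(4-6)] by blast
      then obtain P where P: "quasi_star_prime D (star_f D st) P" "conductor D T x \<subseteq> P"
        by (rule exists_quasi_star_prime_above[OF ideal_conductor[OF D T] conductor_nonzero[OF assms(1) T(2)]])
      have "x \<in> loc T D P" using x P(1) unfolding ell_self[OF T D] by blast
      moreover have "0 \<in> P"
        using P(1) submod_0 unfolding quasi_star_prime_def quasi_star_ideal_def ideal_of_def by blast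
      ultimately show False using conductor_not_subset_if_mem_loc P(2) by blast
    qed
  qed
qed

end
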